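(* Let $N=2$ with $r_{11}=1$ and $g\in(-2,2)$, $h=\sqrt{1-g^2/4}$. The length of the Finsleroid Indicatrix $\{R:K(g;R)=1\}$, measured with the Finsler metric, i.e. $L=\oint\sqrt{g_{pq}(g;R)\,dR^p\,dR^q}$ taken once around the closed curve, equals $$L=\frac{2\pi}{h}.$$ Consequently $L\ge 2\pi$, with $L=2\pi$ if and only if $g=0$, and $L\to\infty$ as $|g|\to2$.
   Context: Here $V_2=\mathbb{R}^2$ with points $R=(R^1,R^2)$, $Z=R^2$, $q(R)=|R^1|$; $G=g/h$. Define $B(g;R)=Z^2+gqZ+q^2$, $A(g;R)=Z+\frac12 gq$, $\Phi(g;R)=\arctan\big(A/(hq)\big)$ if $q>0$, $\Phi=\pi/2$ if $q=0,Z>0$, $\Phi=-\pi/2$ if $q=0,Z<0$; $J(g;R)=e^{\frac12 G\Phi}$ and the Finsleroid metric function $K(g;R)=\sqrt{B(g;R)}\,J(g;R)$ ($K(g;0)=0$). The Finsler metric tensor is $g_{pq}(g;R)=\frac12\,\partial^2K^2/\partial R^p\partial R^q$. *)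

theory Defs
  imports "HOL-Analysis.Analysis"
begin

text \<open>Finsleroid in dimension N = 2 (r_11 = 1). Points R = (R^1, R^2) :: real \<times> real,
  Z = R^2, q(R) = |R^1|.\<close>

definition fh :: "real \<Rightarrow> real" where
  "fh g = sqrt (1 - g\<^sup>2 / 4)"

definition fG :: "real \<Rightarrow> real" where
  "fG g = g / fh g"

definition fq :: "real \<times> real \<Rightarrow> real" where
  "fq R = \<bar>fst R\<bar>"

definition fZ :: "real \<times> real \<Rightarrow> real" where
  "fZ R = snd R"

definition fB :: "real \<Rightarrow> real \<times> real \<Rightarrow> real" where
  "fB g R = (fZ R)\<^sup>2 + g * fq R * fZ R + (fq R)\<^sup>2"

definition fA :: "real \<Rightarrow> real \<times> real \<Rightarrow> real" where
  "fA g R = fZ R + g * fq R / 2"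

definition fPhi :: "real \<Rightarrow> real \<times> real \<Rightarrow> real" where
  "fPhi g R = (if fq R > 0 then arctan (fA g R / (fh g * fq R))
               else if fZ R > 0 then pi / 2 else - pi / 2)"

definition fJ :: "real \<Rightarrow> real \<times> real \<Rightarrow> real" where
  "fJ g R = exp (fG g * fPhi g R / 2)"

definition fK :: "real \<Rightarrow> real \<times> real \<Rightarrow> real" where
  "fK g R = (if R = 0 then 0 else sqrt (fB g R) * fJ g R)"

definition ebasis :: "nat \<Rightarrow> real \<times> real" where
  "ebasis p = (if p = 1 then (1, 0) else (0, 1))"

definition pdiff :: "nat \<Rightarrow> (real \<times> real \<Rightarrow> real) \<Rightarrow> real \<times> real \<Rightarrow> real" where
  "pdiff p f R = deriv (\<lambda>t. f (R + t *\<^sub>R ebasis p)) 0"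

definition gten :: "real \<Rightarrow> nat \<Rightarrow> nat \<Rightarrow> real \<times> real \<Rightarrow> real" where
  "gten g p q R = pdiff p (pdiff q (\<lambda>S. (fK g S)\<^sup>2)) R / 2"

definition comp :: "nat \<Rightarrow> real \<times> real \<Rightarrow> real" where
  "comp p v = (if p = 1 then fst v else snd v)"

definition finsler_speed :: "real \<Rightarrow> (real \<Rightarrow> real \<times> real) \<Rightarrow> real \<Rightarrow> real" where
  "finsler_speed g \<gamma> t =
     (let v = vector_derivative \<gamma> (at t within {0..1}) in
      sqrt (\<Sum>p\<in>{1,2}. \<Sum>q\<in>{1,2}. gten g p q (\<gamma> t) * comp p v * comp q v))"

definition indicatrix :: "real \<Rightarrow> (real \<times> real) set" where
  "indicatrix g = {R. fK g R = 1}"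

definition once_around :: "real \<Rightarrow> (real \<Rightarrow> real \<times> real) \<Rightarrow> bool" where
  "once_around g \<gamma> \<longleftrightarrow> simple_path \<gamma> \<and> pathfinish \<gamma> = pathstart \<gamma> \<and>
     path_image \<gamma> = indicatrix g \<and> \<gamma> C1_differentiable_on {0..1}"

end

theory Submission
  imports Defs "HOL-Real_Asymp.Real_Asymp"
begin

text \<open>Write A = Z + g q / 2, so that B = A^2 + h^2 q^2. On the indicatrix
  sqrt B = exp (- G \<Phi> / 2) and (h q, A) = sqrt B (cos \<Phi>, sin \<Phi>), so each of its halves
  R^1 \<ge> 0 and R^1 \<le> 0 is parametrized by \<Phi> \<in> [-\<pi>/2, \<pi>/2], the two halves meeting at the
  points \<Phi> = \<plusminus>\<pi>/2 of the axis R^1 = 0. Computing the Hessian of K^2 on the half-planes where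
  q is smooth shows that g_pq v^p v^q = (d\<Phi>(v) / h)^2 for every vector v tangent to the
  indicatrix. Hence an arc along which \<Phi> is monotone has Finsler length |\<Delta>\<Phi>| / h, and a
  closed curve running once around the indicatrix, along which \<Phi> sweeps [-\<pi>/2, \<pi>/2] twice,
  has length 2\<pi> / h.\<close>

lemma continuous_inj_on_imp_strict_mono_on:
  fixes \<phi> :: "real \<Rightarrow> real"
  assumes cont: "continuous_on {a..b} \<phi>" and inj: "inj_on \<phi> {a..b}" and ends: "\<phi> a < \<phi> b"
  shows "strict_mono_on {a..b} \<phi>"
proof (rule strict_mono_onI)
  have between: "\<phi> a \<le> \<phi> z \<and> \<phi> z \<le> \<phi> b" if "z \<in> {a..b}" for z
  proof (cases "z = a \<or> z = b")
    case False
    then show ?thesis using continuous_inj_imp_mono[OF _ _ cont inj, of z] ends that by auto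
  qed (use ends in auto)
  fix x y assume xy: "x \<in> {a..b}" "y \<in> {a..b}" "x < y"
  show "\<phi> x < \<phi> y"
  proof (cases "y = b")
    case True
    have "\<phi> x \<noteq> \<phi> b" using inj_onD[OF inj, of x b] xy True by auto
    then show ?thesis using between[OF xy(1)] True by simp
  next
    case False
    have "continuous_on {x..b} \<phi>" "inj_on \<phi> {x..b}"
      using xy by (auto intro: continuous_on_subset[OF cont] inj_on_subset[OF inj])
    then have "(\<phi> x < \<phi> y \<and> \<phi> y < \<phi> b) \<or> (\<phi> b < \<phi> y \<and> \<phi> y < \<phi> x)"
      using continuous_inj_imp_mono[of x y b \<phi>] xy False by simp
    then show ?thesis using between[OF xy(1)] by linarith
  qed
qed

lemma strict_mono_on_has_real_derivative_nonneg:
  fixes \<phi> :: "real \<Rightarrow> real"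
  assumes mono: "strict_mono_on {a..b} \<phi>" and t: "t \<in> {a..<b}"
    and deriv: "(\<phi> has_real_derivative d) (at t)"
  shows "d \<ge> 0"
proof (rule ccontr)
  assume "\<not> d \<ge> 0"
  then obtain e where e: "e > 0" "\<And>k. k > 0 \<Longrightarrow> k < e \<Longrightarrow> \<phi> (t + k) < \<phi> t"
    using DERIV_neg_dec_right[OF deriv] by auto
  define k where "k = min e (b - t) / 2"
  have k: "k > 0" "k < e" "t + k \<le> b" using e t by (auto simp: k_def min_def field_simps)
  then have "\<phi> t < \<phi> (t + k)" using strict_mono_onD[OF mono, of t "t + k"] t by simp
  then show False using e(2)[OF k(1,2)] by simp
qed

lemma has_integral_abs_deriv_of_inj_on:
  fixes \<phi> :: "real \<Rightarrow> real"
  assumes ab: "a \<le> b" and cont: "continuous_on {a..b} \<phi>" and inj: "inj_on \<phi> {a..b}"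
    and deriv: "\<And>t. t \<in> {a<..<b} \<Longrightarrow> (\<phi> has_real_derivative \<phi>' t) (at t)"
  shows "((\<lambda>t. \<bar>\<phi>' t\<bar>) has_integral \<bar>\<phi> b - \<phi> a\<bar>) {a..b}"
proof -
  have increasing: "((\<lambda>t. \<bar>\<phi>' t\<bar>) has_integral \<phi> b - \<phi> a) {a..b}"
    if cont: "continuous_on {a..b} \<phi>" and inj: "inj_on \<phi> {a..b}" and "\<phi> a < \<phi> b"
      and deriv: "\<And>t. t \<in> {a<..<b} \<Longrightarrow> (\<phi> has_real_derivative \<phi>' t) (at t)"
    for \<phi> \<phi>' :: "real \<Rightarrow> real"
  proof -
    have mono: "strict_mono_on {a..b} \<phi>"
      using continuous_inj_on_imp_strict_mono_on that(1-3) .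
    have ftc: "(\<phi>' has_integral \<phi> b - \<phi> a) {a..b}"
      by (rule fundamental_theorem_of_calculus_interior[OF ab cont])
        (simp add: deriv flip: has_real_derivative_iff_has_vector_derivative)
    have nonneg: "\<bar>\<phi>' t\<bar> = \<phi>' t" if "t \<in> {a<..<b}" for t
      using strict_mono_on_has_real_derivative_nonneg[OF mono _ deriv[OF that]] that by simp
    show ?thesis
      by (rule has_integral_spike_finite[of "{a, b}", OF _ _ ftc]) (simp_all add: nonneg)
  qed
  consider "\<phi> a = \<phi> b" | "\<phi> a < \<phi> b" | "\<phi> b < \<phi> a" by linarith
  then show ?thesis
  proof cases
    case 1
    then have "a = b" using inj_onD[OF inj 1] ab by simp
    then show ?thesis by (simp add: has_integral_refl)
  next
    case 2
    then show ?thesis using increasing[OF cont inj _ deriv] by simp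
  next
    case 3
    have neg: "continuous_on {a..b} (\<lambda>t. - \<phi> t)" "inj_on (\<lambda>t. - \<phi> t) {a..b}"
      using cont inj by (auto intro: continuous_intros simp: inj_on_def)
    have "((\<lambda>t. \<bar>- \<phi>' t\<bar>) has_integral - \<phi> b - - \<phi> a) {a..b}"
      by (rule increasing[OF neg]) (use 3 deriv in \<open>auto intro: DERIV_minus\<close>)
    then show ?thesis using 3 by simp
  qed
qed

lemma continuous_on_nonvanishing_sign:
  fixes f :: "real \<Rightarrow> real"
  assumes cont: "continuous_on {a..b} f" and nz: "\<And>t. t \<in> {a<..<b} \<Longrightarrow> f t \<noteq> 0"
  shows "(\<forall>t\<in>{a..b}. 0 \<le> f t) \<or> (\<forall>t\<in>{a..b}. f t \<le> 0)"
proof (rule ccontr)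
  assume "\<not> ?thesis"
  then obtain x y where xy: "x \<in> {a..b}" "y \<in> {a..b}" "f x < 0" "0 < f y" by force
  have "continuous_on {x..y} f" "continuous_on {y..x} f"
    using xy by (auto intro: continuous_on_subset[OF cont])
  then obtain z where z: "min x y \<le> z" "z \<le> max x y" "f z = 0"
    using IVT'[of f x 0 y] IVT2'[of f x 0 y] xy by (cases "x \<le> y") (auto simp: min_def max_def)
  then have "z \<in> {a<..<b}"
    using xy by (cases "z = x \<or> z = y") (auto simp: min_def max_def split: if_splits)
  then show False using nz z(3) by blast
qed

lemma pdiff_eq_has_derivative:
  assumes "open U" "R \<in> U" "\<And>S. S \<in> U \<Longrightarrow> f S = f2 S" "(f2 has_derivative f') (at R)"
  shows "pdiff p f R = f' (ebasis p)"
proof -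
  have f: "(f has_derivative f') (at (R + 0 *\<^sub>R ebasis p))"
    using has_derivative_transform_within_open[OF assms(4,1,2)] assms(3) by simp
  have line: "((\<lambda>t. R + t *\<^sub>R ebasis p) has_vector_derivative ebasis p) (at 0)"
    by (auto intro!: derivative_eq_intros)
  have "((\<lambda>t. f (R + t *\<^sub>R ebasis p)) has_vector_derivative f' (ebasis p)) (at 0)"
    using vector_derivative_diff_chain_within[OF line has_derivative_at_withinI[OF f]]
    by (simp add: o_def)
  then show ?thesis
    unfolding pdiff_def by (simp add: DERIV_imp_deriv flip: has_real_derivative_iff_has_vector_derivative)
qed

lemma has_vector_derivative_if_le:
  fixes f1 f2 :: "real \<Rightarrow> 'a::real_normed_vector"
  assumes f1: "\<And>t. (f1 has_vector_derivative f1' t) (at t)"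
    and f2: "\<And>t. (f2 has_vector_derivative f2' t) (at t)"
    and glue: "f1 c = f2 c" "f1' c = f2' c"
  shows "((\<lambda>t. if t \<le> c then f1 t else f2 t) has_vector_derivative
           (if t \<le> c then f1' t else f2' t)) (at t)"
proof -
  have closures: "closure {..c} = {..c}" "closure {c<..} = {c..}" by simp_all
  have "((\<lambda>t. if t \<in> {..c} then f1 t else f2 t) has_vector_derivative
      (if t \<in> {..c} then f1' t else f2' t)) (at t within UNIV)"
  proof (rule has_vector_derivative_If_within_closures[where T = "{c<..}"])
    show "t \<in> {..c} \<union> {c<..}" "UNIV = {..c} \<union> {c<..}" by auto
  qed (use glue in \<open>auto simp: closures intro: has_vector_derivative_at_within[OF f1]
         has_vector_derivative_at_within[OF f2]\<close>)
  then show ?thesis by simp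
qed

lemma loop_free_inj_on_subinterval:
  assumes "loop_free \<gamma>" "0 \<le> a" "b \<le> 1" "0 < a \<or> b < 1"
  shows "inj_on \<gamma> {a..b}"
  using assms unfolding loop_free_def inj_on_def by (smt (verit) atLeastAtMost_iff)

definition cross :: "real \<times> real \<Rightarrow> real \<times> real \<Rightarrow> real" where
  "cross R v = fst R * snd v - snd R * fst v"

lemma open_half_plane: "open {S :: real \<times> real. 0 < s * fst S}"
  by (intro open_Collect_less continuous_intros)

lemma sgn_half_plane: "fst (R :: real \<times> real) \<noteq> 0 \<Longrightarrow> \<bar>sgn (fst R)\<bar> = 1 \<and> 0 < sgn (fst R) * fst R"
  by (simp add: sgn_if)

locale finsleroid =
  fixes g :: real
  assumes g_bounds: "-2 < g" "g < 2"
begin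

abbreviation h :: real where "h \<equiv> fh g"
abbreviation G :: real where "G \<equiv> fG g"

lemma fh_squared: "h\<^sup>2 = 1 - g\<^sup>2 / 4" and fh_pos: "0 < h"
proof -
  have "0 < (2 - g) * (2 + g)" using g_bounds by simp
  then have "0 < 1 - g\<^sup>2 / 4" by (simp add: algebra_simps power2_eq_square)
  then show "h\<^sup>2 = 1 - g\<^sup>2 / 4" "0 < h" unfolding fh_def by simp_all
qed

lemma fG_times_fh: "G * h = g"
  using fh_pos unfolding fG_def by simp

lemma fB_eq: "fB g R = (fA g R)\<^sup>2 + h\<^sup>2 * (fq R)\<^sup>2"
  unfolding fB_def fA_def fh_squared by (simp add: power2_eq_square field_simps)

lemma fB_pos: "R \<noteq> 0 \<Longrightarrow> 0 < fB g R"
proof (cases "fq R = 0")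
  case True
  moreover assume "R \<noteq> 0"
  ultimately have "fZ R \<noteq> 0" unfolding fq_def fZ_def by (simp add: prod_eq_iff)
  then show ?thesis using True unfolding fB_def by simp
next
  case False
  then show ?thesis unfolding fB_eq using fh_pos by (simp add: add_nonneg_pos)
qed

lemma fA_div_sqrt_fB_bounds:
  assumes "R \<noteq> 0" shows "-1 \<le> fA g R / sqrt (fB g R)" "fA g R / sqrt (fB g R) \<le> 1"
proof -
  have "\<bar>fA g R\<bar> \<le> sqrt (fB g R)"
    unfolding fB_eq by (rule real_le_rsqrt) simp
  then show "-1 \<le> fA g R / sqrt (fB g R)" "fA g R / sqrt (fB g R) \<le> 1"
    using fB_pos[OF assms] by (auto simp: divide_simps abs_le_iff)
qed

lemma fPhi_eq_arcsin:
  assumes R: "R \<noteq> 0" shows "fPhi g R = arcsin (fA g R / sqrt (fB g R))"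
proof (cases "fq R > 0")
  case True
  define u where "u = fA g R / (h * fq R)"
  have hq: "h * fq R > 0" using True fh_pos by simp
  have "1 + u\<^sup>2 = fB g R / (h * fq R)\<^sup>2"
    unfolding u_def fB_eq using True fh_pos by (simp add: field_simps power2_eq_square)
  then have "sqrt (1 + u\<^sup>2) = sqrt (fB g R) / (h * fq R)"
    using hq by (simp add: real_sqrt_divide)
  then have "sin (arctan u) = fA g R / sqrt (fB g R)"
    unfolding sin_arctan using fB_pos[OF R] True fh_pos by (simp add: u_def field_simps)
  then have "arcsin (fA g R / sqrt (fB g R)) = arctan u"
    using arcsin_sin arctan_lbound arctan_ubound by (metis less_le minus_divide_left)
  then show ?thesis using True unfolding fPhi_def u_def by simp
next
  case False
  then have "fq R = 0" unfolding fq_def by simp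
  moreover from this R have "fZ R \<noteq> 0" unfolding fq_def fZ_def by (simp add: prod_eq_iff)
  ultimately show ?thesis
    unfolding fPhi_def fB_def fA_def by (cases "fZ R > 0") auto
qed

lemma fPhi_bounds: "R \<noteq> 0 \<Longrightarrow> -(pi/2) \<le> fPhi g R \<and> fPhi g R \<le> pi/2"
  unfolding fPhi_eq_arcsin using fA_div_sqrt_fB_bounds arcsin_bounded by blast

lemma fA_eq_sin:
  assumes "R \<noteq> 0" shows "fA g R = sqrt (fB g R) * sin (fPhi g R)"
  unfolding fPhi_eq_arcsin[OF assms] sin_arcsin[OF fA_div_sqrt_fB_bounds[OF assms]]
  using fB_pos[OF assms] by simp

lemma fq_eq_cos:
  assumes R: "R \<noteq> 0" shows "h * fq R = sqrt (fB g R) * cos (fPhi g R)"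
proof -
  have B: "0 < fB g R" using fB_pos[OF R] .
  have "1 - (fA g R / sqrt (fB g R))\<^sup>2 = (h * fq R / sqrt (fB g R))\<^sup>2"
    using B by (simp add: fB_eq field_simps power2_eq_square)
  then have "cos (fPhi g R) = h * fq R / sqrt (fB g R)"
    unfolding fPhi_eq_arcsin[OF R] cos_arcsin[OF fA_div_sqrt_fB_bounds[OF R]]
    using fh_pos B by (simp add: fq_def)
  then show ?thesis using B by simp
qed

lemma fK_squared:
  assumes "R \<noteq> 0" shows "(fK g R)\<^sup>2 = fB g R * exp (G * fPhi g R)"
proof -
  have "(exp (G * fPhi g R / 2))\<^sup>2 = exp (G * fPhi g R)"
    by (simp add: power2_eq_square flip: exp_add)
  then show ?thesis
    using assms fB_pos[OF assms] unfolding fK_def fJ_def by (simp add: power_mult_distrib)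
qed

lemma fK_eq_1_iff: "fK g R = 1 \<longleftrightarrow> R \<noteq> 0 \<and> sqrt (fB g R) = exp (- (G * fPhi g R / 2))"
  unfolding fK_def fJ_def fG_def by (auto simp: exp_minus field_simps)

lemma continuous_on_fPhi: "continuous_on (-{0}) (fPhi g)"
proof -
  have "continuous_on (-{0}) (\<lambda>R. arcsin (fA g R / sqrt (fB g R)))"
    using fB_pos fA_div_sqrt_fB_bounds unfolding fA_def fB_def fq_def fZ_def
    by (intro continuous_intros) force+
  then show ?thesis
    by (rule continuous_on_cong[THEN iffD1, rotated 2]) (auto simp: fPhi_eq_arcsin)
qed

text \<open>On the indicatrix (h q, A) = radius \<Phi> (cos \<Phi>, sin \<Phi>) by \<open>fq_eq_cos\<close> and
  \<open>fA_eq_sin\<close>; solving for R^1 = \<sigma> q and Z = A - g q / 2 gives the right half (\<sigma> = 1)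
  and the left half (\<sigma> = -1) of the indicatrix as functions of \<Phi>.\<close>

definition radius :: "real \<Rightarrow> real" where
  "radius \<phi> = exp (- (G * \<phi> / 2))"

definition branch :: "real \<Rightarrow> real \<Rightarrow> real \<times> real" where
  "branch \<sigma> \<phi> = (\<sigma> * radius \<phi> * cos \<phi> / h, radius \<phi> * (sin \<phi> - g * cos \<phi> / (2 * h)))"

lemma radius_pos: "0 < radius \<phi>"
  unfolding radius_def by simp

lemma branch_on_indicatrix:
  assumes \<sigma>: "\<bar>\<sigma>\<bar> = 1" and \<phi>: "-(pi/2) \<le> \<phi>" "\<phi> \<le> pi/2"
  shows "fK g (branch \<sigma> \<phi>) = 1" "fPhi g (branch \<sigma> \<phi>) = \<phi>"
proof -
  let ?R = "branch \<sigma> \<phi>"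
  have "0 \<le> cos \<phi>" using \<phi> by (simp add: cos_ge_zero)
  then have q: "fq ?R = radius \<phi> * cos \<phi> / h"
    using \<sigma> radius_pos[of \<phi>] fh_pos by (simp add: fq_def branch_def abs_mult)
  have A: "fA g ?R = radius \<phi> * sin \<phi>"
    using fh_pos unfolding fA_def q by (simp add: fZ_def branch_def field_simps)
  have "fB g ?R = (radius \<phi> * sin \<phi>)\<^sup>2 + (radius \<phi> * cos \<phi>)\<^sup>2"
    using fh_pos unfolding fB_eq A q by (simp add: power_divide power_mult_distrib)
  also have "\<dots> = (radius \<phi>)\<^sup>2"
    by (metis power_mult_distrib distrib_left sin_cos_squared_add mult_1_right)
  finally have sqrt_B: "sqrt (fB g ?R) = radius \<phi>"
    using radius_pos[of \<phi>] by simp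
  then have "?R \<noteq> 0"
    using radius_pos[of \<phi>] by (auto simp: fB_def fq_def fZ_def)
  moreover show Phi: "fPhi g ?R = \<phi>"
    using radius_pos[of \<phi>] \<phi> \<open>?R \<noteq> 0\<close> by (simp add: fPhi_eq_arcsin sqrt_B A arcsin_sin)
  ultimately show "fK g ?R = 1"
    unfolding fK_eq_1_iff Phi sqrt_B radius_def by simp
qed

lemma indicatrix_eq_branch:
  assumes K: "fK g R = 1" and \<sigma>: "\<bar>\<sigma>\<bar> = 1" "0 \<le> \<sigma> * fst R"
  shows "R = branch \<sigma> (fPhi g R)"
proof -
  have R: "R \<noteq> 0" and sqrt_B: "sqrt (fB g R) = radius (fPhi g R)"
    using K unfolding fK_eq_1_iff radius_def by auto
  have q: "fq R = radius (fPhi g R) * cos (fPhi g R) / h"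
    using fq_eq_cos[OF R] fh_pos unfolding sqrt_B by (simp add: field_simps)
  have "\<sigma> = 1 \<or> \<sigma> = -1" using \<sigma>(1) by (cases "\<sigma> \<ge> 0") auto
  then have "fst R = \<sigma> * fq R"
    using \<sigma>(2) unfolding fq_def by (auto simp: abs_if)
  moreover have "snd R = radius (fPhi g R) * (sin (fPhi g R) - g * cos (fPhi g R) / (2 * h))"
    using fA_eq_sin[OF R] q fh_pos unfolding sqrt_B fA_def fZ_def by (simp add: field_simps)
  ultimately show ?thesis
    unfolding branch_def q by (simp add: prod_eq_iff)
qed

lemma indicatrix_axis:
  assumes K: "fK g R = 1" and axis: "fst R = 0"
  shows "R = branch 1 (pi/2) \<or> R = branch 1 (-(pi/2))"
proof -
  have R: "R \<noteq> 0" using K unfolding fK_eq_1_iff by simp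
  have "cos (fPhi g R) = 0"
    using fq_eq_cos[OF R] fB_pos[OF R] axis by (simp add: fq_def)
  then have "fPhi g R = pi/2 \<or> fPhi g R = -(pi/2)"
    using fPhi_bounds[OF R] cos_gt_zero_pi[of "fPhi g R"] by force
  then show ?thesis
    using indicatrix_eq_branch[OF K, of 1] axis by (metis abs_one mult_1 order_refl)
qed

text \<open>On the open half-plane 0 < s R^1, with s = 1 or s = -1, we have q = s R^1, and B, \<Phi>
  and the factor exp (G \<Phi>) of K^2 are the smooth functions below.\<close>

definition B_half :: "real \<Rightarrow> real \<times> real \<Rightarrow> real" where
  "B_half s R = (snd R)\<^sup>2 + g * (s * fst R) * snd R + (s * fst R)\<^sup>2"

definition Phi_half :: "real \<Rightarrow> real \<times> real \<Rightarrow> real" where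
  "Phi_half s R = arctan ((snd R + g * (s * fst R) / 2) / (h * (s * fst R)))"

definition E_half :: "real \<Rightarrow> real \<times> real \<Rightarrow> real" where
  "E_half s R = exp (G * Phi_half s R)"

lemma B_half_eq: "B_half s R = (snd R + g * (s * fst R) / 2)\<^sup>2 + h\<^sup>2 * (s * fst R)\<^sup>2"
  unfolding B_half_def fh_squared by (simp add: power2_eq_square field_simps)

lemma B_half_pos: "s \<noteq> 0 \<Longrightarrow> fst R \<noteq> 0 \<Longrightarrow> 0 < B_half s R"
  unfolding B_half_eq using fh_pos by (simp add: add_nonneg_pos)

lemma half_plane_eqs:
  assumes s: "\<bar>s\<bar> = 1" and R: "0 < s * fst R"
  shows "fq R = s * fst R" "fB g R = B_half s R" "fPhi g R = Phi_half s R"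
    "(fK g R)\<^sup>2 = B_half s R * E_half s R"
proof -
  show q: "fq R = s * fst R"
    using s R unfolding fq_def by (auto simp: abs_if zero_less_mult_iff)
  show B: "fB g R = B_half s R"
    unfolding fB_def B_half_def q fZ_def ..
  show Phi: "fPhi g R = Phi_half s R"
    using R unfolding fPhi_def Phi_half_def fA_def fZ_def q by simp
  have "R \<noteq> 0" using R by auto
  then show "(fK g R)\<^sup>2 = B_half s R * E_half s R"
    by (simp add: fK_squared E_half_def B Phi)
qed

lemma Phi_half_has_derivative:
  assumes s: "s \<noteq> 0" and R: "fst R \<noteq> 0"
  shows "(Phi_half s has_derivative (\<lambda>v. h * s * cross R v / B_half s R)) (at R)"
proof -
  have hq: "h * (s * fst R) \<noteq> 0" using s R fh_pos by simp
  have quotient: "((\<lambda>S. (snd S + g * (s * fst S) / 2) / (h * (s * fst S))) has_derivative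
      (\<lambda>v. h * s * cross R v / (h * (s * fst R))\<^sup>2)) (at R)"
    using hq by (auto intro!: derivative_eq_intros simp: cross_def field_simps power2_eq_square)
  have arctan': "inverse (1 + ((snd R + g * (s * fst R) / 2) / (h * (s * fst R)))\<^sup>2)
      = (h * (s * fst R))\<^sup>2 / B_half s R"
    using hq B_half_pos[OF s R] unfolding B_half_eq by (simp add: field_simps power2_eq_square)
  show ?thesis
    unfolding Phi_half_def
  proof (rule has_derivative_eq_rhs[OF DERIV_arctan[THEN DERIV_compose_FDERIV, OF quotient]])
    show "(\<lambda>v. h * s * cross R v / (h * (s * fst R))\<^sup>2 *
        inverse (1 + ((snd R + g * (s * fst R) / 2) / (h * (s * fst R)))\<^sup>2)) =
      (\<lambda>v. h * s * cross R v / B_half s R)"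
      unfolding arctan' using hq by (simp add: fun_eq_iff)
  qed
qed

lemma E_half_has_derivative:
  assumes "s \<noteq> 0" "fst R \<noteq> 0"
  shows "(E_half s has_derivative (\<lambda>v. g * s * E_half s R * cross R v / B_half s R)) (at R)"
proof -
  have "G * (h * s * cross R v / B_half s R) = g * s * cross R v / B_half s R" for v
    using fG_times_fh by (metis mult.assoc times_divide_eq_right)
  then show ?thesis
    unfolding E_half_def[abs_def]
    by (intro has_derivative_eq_rhs[OF DERIV_exp[THEN DERIV_compose_FDERIV,
          OF has_derivative_mult_right[OF Phi_half_has_derivative[OF assms]]]])
      (simp add: fun_eq_iff)
qed

lemma B_half_E_half_has_derivative:
  assumes s: "\<bar>s\<bar> = 1" and R: "fst R \<noteq> 0"
  shows "((\<lambda>S. B_half s S * E_half s S) has_derivative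
    (\<lambda>v. 2 * E_half s R * (fst R * fst v + (snd R + g * s * fst R) * snd v))) (at R)"
proof -
  have s0: "s \<noteq> 0" using s by auto
  have ss: "s * (s * x) = x" for x using s by (metis abs_mult_self_eq mult_1 mult.assoc)
  have B: "(B_half s has_derivative (\<lambda>v. 2 * snd R * snd v + g * s * (fst v * snd R + fst R * snd v)
      + 2 * s * s * fst R * fst v)) (at R)"
    unfolding B_half_def[abs_def]
    by (auto intro!: derivative_eq_intros simp: algebra_simps power2_eq_square)
  show ?thesis
    using B_half_pos[OF s0 R] ss
    by (intro has_derivative_eq_rhs[OF has_derivative_mult[OF B E_half_has_derivative[OF s0 R]]])
      (simp add: fun_eq_iff cross_def B_half_def field_simps power2_eq_square ss)
qed

lemma grad1_half_has_derivative:
  assumes "s \<noteq> 0" "fst R \<noteq> 0"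
  shows "((\<lambda>S. 2 * E_half s S * fst S) has_derivative
    (\<lambda>v. 2 * E_half s R * fst v + 2 * fst R * (g * s * E_half s R * cross R v / B_half s R))) (at R)"
  by (auto intro!: derivative_eq_intros E_half_has_derivative[OF assms] simp: algebra_simps)

lemma grad2_half_has_derivative:
  assumes "s \<noteq> 0" "fst R \<noteq> 0"
  shows "((\<lambda>S. 2 * E_half s S * (snd S + g * s * fst S)) has_derivative
    (\<lambda>v. 2 * E_half s R * (snd v + g * s * fst v)
       + 2 * (snd R + g * s * fst R) * (g * s * E_half s R * cross R v / B_half s R))) (at R)"
  by (auto intro!: derivative_eq_intros E_half_has_derivative[OF assms]
      simp: algebra_simps add_divide_distrib)

lemma pdiff_fK_squared_half:
  assumes s: "\<bar>s\<bar> = 1" and S: "0 < s * fst S"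
  shows "pdiff 1 (\<lambda>S. (fK g S)\<^sup>2) S = 2 * E_half s S * fst S"
    "pdiff 2 (\<lambda>S. (fK g S)\<^sup>2) S = 2 * E_half s S * (snd S + g * s * fst S)"
proof -
  have "pdiff p (\<lambda>S. (fK g S)\<^sup>2) S
      = 2 * E_half s S * (fst S * fst (ebasis p) + (snd S + g * s * fst S) * snd (ebasis p))" for p
    using S half_plane_eqs(4)[OF s]
    by (intro pdiff_eq_has_derivative[OF open_half_plane _ _ B_half_E_half_has_derivative[OF s]]) auto
  then show "pdiff 1 (\<lambda>S. (fK g S)\<^sup>2) S = 2 * E_half s S * fst S"
    "pdiff 2 (\<lambda>S. (fK g S)\<^sup>2) S = 2 * E_half s S * (snd S + g * s * fst S)"
    by (simp_all add: ebasis_def)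
qed

definition metric_form :: "real \<times> real \<Rightarrow> real \<times> real \<Rightarrow> real" where
  "metric_form R v = (\<Sum>p\<in>{1,2}. \<Sum>q\<in>{1,2}. gten g p q R * comp p v * comp q v)"

lemma metric_form_half:
  assumes s: "\<bar>s\<bar> = 1" and R: "0 < s * fst R"
  shows "metric_form R v =
    E_half s R / B_half s R * ((fst R * fst v + (snd R + g * s * fst R) * snd v)\<^sup>2 + (cross R v)\<^sup>2)"
proof -
  have s0: "s \<noteq> 0" and R0: "fst R \<noteq> 0" using R by auto
  have ss: "s * s = 1" using s by (metis abs_mult_self_eq mult_1)
  define a where "a = fst R * fst v + (snd R + g * s * fst R) * snd v"
  define dE where "dE w = g * s * E_half s R * cross R w / B_half s R" for w
  have H1: "pdiff p (pdiff 1 (\<lambda>S. (fK g S)\<^sup>2)) R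
      = 2 * E_half s R * fst (ebasis p) + 2 * fst R * dE (ebasis p)" for p
    unfolding dE_def using R pdiff_fK_squared_half(1)[OF s]
    by (intro pdiff_eq_has_derivative[OF open_half_plane _ _ grad1_half_has_derivative[OF s0 R0]]) auto
  have H2: "pdiff p (pdiff 2 (\<lambda>S. (fK g S)\<^sup>2)) R
      = 2 * E_half s R * (snd (ebasis p) + g * s * fst (ebasis p))
        + 2 * (snd R + g * s * fst R) * dE (ebasis p)" for p
    unfolding dE_def using R pdiff_fK_squared_half(2)[OF s]
    by (intro pdiff_eq_has_derivative[OF open_half_plane _ _ grad2_half_has_derivative[OF s0 R0]]) auto
  have "metric_form R v
      = gten g 1 1 R * fst v * fst v + gten g 1 2 R * fst v * snd v
        + gten g 2 1 R * snd v * fst v + gten g 2 2 R * snd v * snd v"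
    by (simp add: metric_form_def comp_def)
  also have "\<dots> = E_half s R * ((fst v)\<^sup>2 + (snd v)\<^sup>2 + g * s * fst v * snd v) + a * dE v"
    unfolding gten_def H1 H2 using B_half_pos[OF s0 R0]
    by (simp add: ebasis_def dE_def a_def cross_def field_simps power2_eq_square)
  also have "\<dots> = E_half s R / B_half s R * (a\<^sup>2 + (cross R v)\<^sup>2)"
  proof -
    have "E_half s R * ((fst v)\<^sup>2 + (snd v)\<^sup>2 + g * s * fst v * snd v) + a * dE v
      = E_half s R / B_half s R
        * (B_half s R * ((fst v)\<^sup>2 + (snd v)\<^sup>2 + g * s * fst v * snd v) + g * s * a * cross R v)"
      using B_half_pos[OF s0 R0] unfolding dE_def by (simp add: field_simps)
    also have "B_half s R * ((fst v)\<^sup>2 + (snd v)\<^sup>2 + g * s * fst v * snd v) + g * s * a * cross R v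
        = a\<^sup>2 + (cross R v)\<^sup>2"
      using ss unfolding B_half_def a_def cross_def by algebra
    finally show ?thesis .
  qed
  finally show ?thesis unfolding a_def .
qed

lemma metric_form_eq:
  assumes "fst R \<noteq> 0"
  shows "metric_form R v =
    exp (G * fPhi g R) / fB g R * ((fst R * fst v + (fZ R + g * fq R) * snd v)\<^sup>2 + (cross R v)\<^sup>2)"
  using metric_form_half[of "sgn (fst R)" R v] half_plane_eqs[of "sgn (fst R)" R]
    sgn_half_plane[OF assms]
  by (simp add: E_half_def fZ_def mult.assoc)

lemma fPhi_has_derivative:
  assumes R: "fst R \<noteq> 0"
  shows "(fPhi g has_derivative (\<lambda>v. h * sgn (fst R) * cross R v / fB g R)) (at R)"
proof -
  have s: "\<bar>sgn (fst R)\<bar> = 1" "0 < sgn (fst R) * fst R" using sgn_half_plane[OF R] by auto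
  have "(Phi_half (sgn (fst R)) has_derivative (\<lambda>v. h * sgn (fst R) * cross R v / fB g R)) (at R)"
    using Phi_half_has_derivative[OF _ R, of "sgn (fst R)"] R by (simp add: sgn_if half_plane_eqs(2)[OF s])
  then show ?thesis
    by (rule has_derivative_transform_within_open[OF _ open_half_plane[of "sgn (fst R)"]])
      (use s half_plane_eqs(3)[OF s(1)] in auto)
qed

lemma fK_squared_has_derivative:
  assumes R: "fst R \<noteq> 0"
  shows "((\<lambda>S. (fK g S)\<^sup>2) has_derivative
    (\<lambda>v. 2 * exp (G * fPhi g R) * (fst R * fst v + (fZ R + g * fq R) * snd v))) (at R)"
proof -
  have s: "\<bar>sgn (fst R)\<bar> = 1" "0 < sgn (fst R) * fst R" using sgn_half_plane[OF R] by auto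
  have "((\<lambda>S. B_half (sgn (fst R)) S * E_half (sgn (fst R)) S) has_derivative
      (\<lambda>v. 2 * exp (G * fPhi g R) * (fst R * fst v + (fZ R + g * fq R) * snd v))) (at R)"
    using B_half_E_half_has_derivative[OF s(1) R]
    by (simp add: half_plane_eqs[OF s] E_half_def fZ_def mult.assoc)
  then show ?thesis
    by (rule has_derivative_transform_within_open[OF _ open_half_plane[of "sgn (fst R)"]])
      (use s half_plane_eqs(4)[OF s(1)] in auto)
qed

lemma sqrt_metric_form_tangent:
  assumes \<gamma>: "(\<gamma> has_vector_derivative v) (at t)" and T: "open T" "t \<in> T"
    and on: "\<And>\<tau>. \<tau> \<in> T \<Longrightarrow> fK g (\<gamma> \<tau>) = 1" and R: "fst (\<gamma> t) \<noteq> 0"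
  shows "sqrt (metric_form (\<gamma> t) v)
    = \<bar>cross (\<gamma> t) v\<bar> / fB g (\<gamma> t)"
proof -
  define R where "R = \<gamma> t"
  \<comment> \<open>Differentiating K(\<gamma>) = 1 kills the first square in \<open>metric_form_eq\<close>, and K = 1
    turns exp (G \<Phi>) into 1 / B.\<close>
  have "((\<lambda>\<tau>. (fK g (\<gamma> \<tau>))\<^sup>2) has_real_derivative
      2 * exp (G * fPhi g R) * (fst R * fst v + (fZ R + g * fq R) * snd v)) (at t)"
    using vector_derivative_diff_chain_within[OF \<gamma> has_derivative_at_withinI[OF fK_squared_has_derivative[OF R]]]
    by (simp add: o_def R_def has_real_derivative_iff_has_vector_derivative)
  moreover have "((\<lambda>\<tau>. (fK g (\<gamma> \<tau>))\<^sup>2) has_real_derivative 0) (at t)"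
    by (rule has_field_derivative_transform_within_open[OF DERIV_const T]) (simp add: on)
  ultimately have tangent: "fst R * fst v + (fZ R + g * fq R) * snd v = 0"
    using DERIV_unique by fastforce
  have R0: "R \<noteq> 0" using on[OF T(2)] unfolding R_def fK_eq_1_iff by simp
  have "fB g R * exp (G * fPhi g R) = 1"
    using fK_squared[OF R0] on[OF T(2)] by (simp add: R_def)
  then have E: "exp (G * fPhi g R) = 1 / fB g R"
    using fB_pos[OF R0] by (simp add: field_simps)
  have "metric_form R v
      = exp (G * fPhi g R) / fB g R * (cross R v)\<^sup>2"
    using metric_form_eq[OF R[folded R_def], of v] unfolding tangent by simp
  also have "\<dots> = (cross R v / fB g R)\<^sup>2"
    unfolding E by (simp add: power2_eq_square)
  finally have "metric_form R v
      = (cross R v / fB g R)\<^sup>2" .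
  then show ?thesis
    using fB_pos[OF R0] by (simp add: R_def)
qed

lemma finsler_speed_indicatrix:
  assumes \<gamma>: "(\<gamma> has_vector_derivative v) (at t)" and t: "t \<in> {0<..<1}"
    and on: "\<And>\<tau>. \<tau> \<in> {0..1} \<Longrightarrow> fK g (\<gamma> \<tau>) = 1" and R: "fst (\<gamma> t) \<noteq> 0"
  shows "finsler_speed g \<gamma> t = \<bar>cross (\<gamma> t) v\<bar> / fB g (\<gamma> t)"
proof -
  have vd: "vector_derivative \<gamma> (at t within {0..1}) = v"
    using vector_derivative_within_cbox[of 0 1 t \<gamma> v] t has_vector_derivative_at_within[OF \<gamma>]
    by simp
  show ?thesis
    unfolding finsler_speed_def Let_def metric_form_def[symmetric] vd using on t R
    by (intro sqrt_metric_form_tangent[OF \<gamma> open_greaterThanLessThan]) auto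
qed

lemma finsler_speed_has_integral_arc:
  assumes \<gamma>': "\<And>t. t \<in> {0<..<1} \<Longrightarrow> (\<gamma> has_vector_derivative \<gamma>' t) (at t)"
    and cont: "continuous_on {0..1} \<gamma>" and on: "\<gamma> ` {0..1} \<subseteq> indicatrix g"
    and ab: "0 \<le> a" "a \<le> b" "b \<le> 1" and off_axis: "\<And>t. t \<in> {a<..<b} \<Longrightarrow> fst (\<gamma> t) \<noteq> 0"
    and inj: "inj_on \<gamma> {a..b}"
  shows "(finsler_speed g \<gamma> has_integral \<bar>fPhi g (\<gamma> b) - fPhi g (\<gamma> a)\<bar> / h) {a..b}"
proof -
  define \<phi> where "\<phi> t = fPhi g (\<gamma> t)" for t
  define \<phi>' where "\<phi>' t = h * sgn (fst (\<gamma> t)) * cross (\<gamma> t) (\<gamma>' t) / fB g (\<gamma> t)" for t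
  have sub: "{a..b} \<subseteq> {0..1}" using ab by auto
  have K: "fK g (\<gamma> t) = 1" if "t \<in> {0..1}" for t
    using on that unfolding indicatrix_def by blast
  then have nonzero: "\<gamma> t \<noteq> 0" if "t \<in> {0..1}" for t
    using that unfolding fK_eq_1_iff by blast
  have cont_\<phi>: "continuous_on {a..b} \<phi>"
    unfolding \<phi>_def using sub nonzero
    by (intro continuous_on_compose2[OF continuous_on_fPhi continuous_on_subset[OF cont sub]]) auto
  obtain \<sigma> :: real where \<sigma>: "\<bar>\<sigma>\<bar> = 1" "\<And>t. t \<in> {a..b} \<Longrightarrow> 0 \<le> \<sigma> * fst (\<gamma> t)"
  proof -
    have "continuous_on {a..b} (\<lambda>t. fst (\<gamma> t))"
      by (intro continuous_intros continuous_on_subset[OF cont sub])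
    from continuous_on_nonvanishing_sign[OF this off_axis] show ?thesis
    proof
      assume "\<forall>t\<in>{a..b}. 0 \<le> fst (\<gamma> t)"
      then show ?thesis by (intro that[of 1]) auto
    next
      assume "\<forall>t\<in>{a..b}. fst (\<gamma> t) \<le> 0"
      then show ?thesis by (intro that[of "-1"]) auto
    qed
  qed
  have inj_\<phi>: "inj_on \<phi> {a..b}"
  proof (rule inj_onI)
    fix x y assume xy: "x \<in> {a..b}" "y \<in> {a..b}" "\<phi> x = \<phi> y"
    then have "\<gamma> x = \<gamma> y"
      using indicatrix_eq_branch[OF K \<sigma>(1) \<sigma>(2)] sub unfolding \<phi>_def by (metis subsetD)
    then show "x = y" using inj xy by (auto dest: inj_onD)
  qed
  have interior: "t \<in> {0<..<1}" if "t \<in> {a<..<b}" for t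
    using that ab by auto
  have deriv_\<phi>: "(\<phi> has_real_derivative \<phi>' t) (at t)" if t: "t \<in> {a<..<b}" for t
    using vector_derivative_diff_chain_within[OF \<gamma>'[OF interior[OF t]]
        has_derivative_at_withinI[OF fPhi_has_derivative[OF off_axis[OF t]]]]
    by (simp add: \<phi>_def[abs_def] \<phi>'_def o_def has_real_derivative_iff_has_vector_derivative)
  have speed: "finsler_speed g \<gamma> t = \<bar>\<phi>' t\<bar> / h" if t: "t \<in> {a<..<b}" for t
    using finsler_speed_indicatrix[OF \<gamma>'[OF interior[OF t]] interior[OF t] K off_axis[OF t]]
      fh_pos off_axis[OF t] fB_pos[OF nonzero, of t] interior[OF t]
    unfolding \<phi>'_def by (simp add: abs_mult abs_sgn_eq)
  have "((\<lambda>t. \<bar>\<phi>' t\<bar> / h) has_integral \<bar>\<phi> b - \<phi> a\<bar> / h) {a..b}"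
    by (intro has_integral_divide has_integral_abs_deriv_of_inj_on[OF ab(2) cont_\<phi> inj_\<phi> deriv_\<phi>])
  then show ?thesis
    unfolding \<phi>_def by (rule has_integral_spike_finite[of "{a, b}", rotated 2]) (auto simp: speed)
qed

lemma once_around_fK:
  assumes "once_around g \<gamma>" "t \<in> {0..1}"
  shows "fK g (\<gamma> t) = 1"
proof -
  have "\<gamma> t \<in> path_image \<gamma>" using assms(2) unfolding path_image_def by (rule imageI)
  then show ?thesis using assms(1) unfolding once_around_def indicatrix_def by simp
qed

lemma once_around_unique_time:
  assumes "once_around g \<gamma>" "fK g P = 1"
  shows "\<exists>!t. t \<in> {0..<1} \<and> \<gamma> t = P"
proof -
  have lf: "loop_free \<gamma>" and closed: "\<gamma> 1 = \<gamma> 0"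
    using assms(1) unfolding once_around_def simple_path_def pathstart_def pathfinish_def by auto
  have "P \<in> \<gamma> ` {0..1}"
    using assms unfolding once_around_def path_image_def indicatrix_def by simp
  then obtain t where t: "t \<in> {0..1}" "\<gamma> t = P" by (rule imageE) simp
  have "\<exists>t. t \<in> {0..<1} \<and> \<gamma> t = P"
  proof (cases "t = 1")
    case True
    then show ?thesis using t closed by (intro exI[of _ 0]) auto
  qed (use t in auto)
  moreover have "x = y" if "x \<in> {0..<1}" "y \<in> {0..<1}" "\<gamma> x = \<gamma> y" for x y
  proof -
    have "x \<in> {0..1}" "y \<in> {0..1}" using that(1,2) by simp_all
    then have "x = y \<or> x = 0 \<and> y = 1 \<or> x = 1 \<and> y = 0"
      using lf that(3) unfolding loop_free_def by blast
    then show ?thesis using that(1,2) by auto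
  qed
  ultimately show ?thesis by blast
qed

text \<open>The poles \<open>branch 1 (\<plusminus>\<pi>/2)\<close> are the only points of the indicatrix on the axis
  R^1 = 0, so they cut a curve going once around it into three arcs with \<Phi> injective on each;
  \<Phi> changes by \<pi> along the middle arc and by \<pi> along the outer two together.\<close>

lemma once_around_poles:
  assumes "once_around g \<gamma>"
  obtains t1 t2 where "0 \<le> t1" "t1 < t2" "t2 < 1"
    "fPhi g (\<gamma> t1) = pi/2 \<and> fPhi g (\<gamma> t2) = -(pi/2) \<or> fPhi g (\<gamma> t1) = -(pi/2) \<and> fPhi g (\<gamma> t2) = pi/2"
    "\<And>t. t \<in> {0<..<1} - {t1, t2} \<Longrightarrow> fst (\<gamma> t) \<noteq> 0"
proof -
  have poles: "fK g (branch 1 (pi/2)) = 1" "fK g (branch 1 (-(pi/2))) = 1"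
    by (simp_all add: branch_on_indicatrix)
  obtain tN where tN: "tN \<in> {0..<1}" "\<gamma> tN = branch 1 (pi/2)"
    using once_around_unique_time[OF assms poles(1)] by blast
  obtain tS where tS: "tS \<in> {0..<1}" "\<gamma> tS = branch 1 (-(pi/2))"
    using once_around_unique_time[OF assms poles(2)] by blast
  have Phi_poles: "fPhi g (\<gamma> tN) = pi/2" "fPhi g (\<gamma> tS) = -(pi/2)"
    using tN tS branch_on_indicatrix(2)[of 1] by auto
  then have "tN \<noteq> tS" using pi_gt_zero by force
  have same_time: "x = y" if "x \<in> {0..<1}" "y \<in> {0..<1}" "\<gamma> x = \<gamma> y" for x y
  proof -
    have "\<exists>!t. t \<in> {0..<1} \<and> \<gamma> t = \<gamma> y"
      using once_around_unique_time[OF assms once_around_fK[OF assms]] that(2) by simp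
    then show ?thesis using that by blast
  qed
  have "fst (\<gamma> t) \<noteq> 0" if t: "t \<in> {0<..<1} - {tN, tS}" for t
  proof
    assume "fst (\<gamma> t) = 0"
    then have "\<gamma> t = \<gamma> tN \<or> \<gamma> t = \<gamma> tS"
      using indicatrix_axis[OF once_around_fK[OF assms]] t tN tS by auto
    then show False
      using same_time[of t tN] same_time[of t tS] t tN tS by auto
  qed
  then show ?thesis
    using that[of "min tN tS" "max tN tS"] tN tS \<open>tN \<noteq> tS\<close> Phi_poles
    by (cases "tN \<le> tS") (auto simp: min_def max_def)
qed

lemma finsler_speed_has_integral_once_around:
  assumes "once_around g \<gamma>"
  shows "(finsler_speed g \<gamma> has_integral 2 * pi / h) {0..1}"
proof -
  obtain \<gamma>' where \<gamma>': "\<And>t. t \<in> {0..1} \<Longrightarrow> (\<gamma> has_vector_derivative \<gamma>' t) (at t)"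
    using assms unfolding once_around_def C1_differentiable_on_def by blast
  have cont: "continuous_on {0..1} \<gamma>" and lf: "loop_free \<gamma>" and closed: "\<gamma> 1 = \<gamma> 0"
    and on: "\<gamma> ` {0..1} \<subseteq> indicatrix g"
    using assms unfolding once_around_def simple_path_def path_def pathstart_def pathfinish_def
      path_image_def by auto
  obtain t1 t2 where t12: "0 \<le> t1" "t1 < t2" "t2 < 1"
    and poles: "fPhi g (\<gamma> t1) = pi/2 \<and> fPhi g (\<gamma> t2) = -(pi/2)
      \<or> fPhi g (\<gamma> t1) = -(pi/2) \<and> fPhi g (\<gamma> t2) = pi/2"
    and off_axis: "\<And>t. t \<in> {0<..<1} - {t1, t2} \<Longrightarrow> fst (\<gamma> t) \<noteq> 0"
    using once_around_poles[OF assms] by blast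
  have arc: "(finsler_speed g \<gamma> has_integral \<bar>fPhi g (\<gamma> b) - fPhi g (\<gamma> a)\<bar> / h) {a..b}"
    if "(a, b) \<in> {(0, t1), (t1, t2), (t2, 1)}" for a b
  proof (rule finsler_speed_has_integral_arc[where \<gamma>' = \<gamma>', OF _ cont on])
    show "inj_on \<gamma> {a..b}"
      using that t12 by (intro loop_free_inj_on_subinterval[OF lf]) auto
  qed (use that t12 \<gamma>' off_axis in auto)
  have "(finsler_speed g \<gamma> has_integral
      \<bar>fPhi g (\<gamma> t1) - fPhi g (\<gamma> 0)\<bar> / h + \<bar>fPhi g (\<gamma> t2) - fPhi g (\<gamma> t1)\<bar> / h
        + \<bar>fPhi g (\<gamma> 1) - fPhi g (\<gamma> t2)\<bar> / h) {0..1}"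
    using t12 by (intro has_integral_combine[of 0 t2 1] has_integral_combine[of 0 t1 t2] arc) auto
  moreover have "\<bar>fPhi g (\<gamma> t1) - fPhi g (\<gamma> 0)\<bar> + \<bar>fPhi g (\<gamma> t2) - fPhi g (\<gamma> t1)\<bar>
      + \<bar>fPhi g (\<gamma> 1) - fPhi g (\<gamma> t2)\<bar> = 2 * pi"
  proof -
    have "-(pi/2) \<le> fPhi g (\<gamma> 0)" "fPhi g (\<gamma> 0) \<le> pi/2"
      using fPhi_bounds once_around_fK[OF assms, of 0] unfolding fK_eq_1_iff by simp_all
    then show ?thesis using poles unfolding closed by (elim disjE conjE) linarith+
  qed
  ultimately show ?thesis
    unfolding add_divide_distrib[symmetric] by simp
qed

definition branch' :: "real \<Rightarrow> real \<Rightarrow> real \<times> real" where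
  "branch' \<sigma> \<phi> = (\<sigma> * radius \<phi> * (- (G/2) * cos \<phi> - sin \<phi>) / h,
     radius \<phi> * (cos \<phi> + g * sin \<phi> / (2 * h) - G/2 * (sin \<phi> - g * cos \<phi> / (2 * h))))"

lemma branch_has_vector_derivative: "(branch \<sigma> has_vector_derivative branch' \<sigma> \<phi>) (at \<phi>)"
proof -
  have "((\<lambda>\<phi>. \<sigma> * radius \<phi> * cos \<phi> / h) has_real_derivative
      \<sigma> * radius \<phi> * (- (G/2) * cos \<phi> - sin \<phi>) / h) (at \<phi>)"
    unfolding radius_def using fh_pos by (auto intro!: derivative_eq_intros simp: field_simps)
  moreover have "((\<lambda>\<phi>. radius \<phi> * (sin \<phi> - g * cos \<phi> / (2 * h))) has_real_derivative
      radius \<phi> * (cos \<phi> + g * sin \<phi> / (2 * h) - G/2 * (sin \<phi> - g * cos \<phi> / (2 * h)))) (at \<phi>)"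
    unfolding radius_def using fh_pos by (auto intro!: derivative_eq_intros simp: field_simps)
  ultimately show ?thesis
    unfolding branch_def[abs_def] branch'_def
    by (intro has_vector_derivative_Pair) (simp_all add: has_real_derivative_iff_has_vector_derivative)
qed

lemma continuous_branch': "continuous_on UNIV (branch' \<sigma>)"
  unfolding branch'_def radius_def using fh_pos by (intro continuous_intros) auto

lemma branch_cos_zero: "cos \<phi> = 0 \<Longrightarrow> branch \<sigma> \<phi> = branch 1 \<phi>"
  by (simp add: branch_def)

text \<open>The vertical velocity vanishes at the north pole, so the two halves join there in a
  C^1 way.\<close>

lemma branch'_north: "branch' \<sigma> (pi/2) = (- \<sigma> * radius (pi/2) / h, 0)"
  using fG_times_fh fh_pos by (simp add: branch'_def field_simps)

lemma branch_affine_has_vector_derivative: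
  "((\<lambda>t. branch \<sigma> (a * t + b)) has_vector_derivative a *\<^sub>R branch' \<sigma> (a * t + b)) (at t)"
proof -
  have "((\<lambda>t. a * t + b) has_vector_derivative a) (at t)"
    by (auto intro!: derivative_eq_intros simp flip: has_real_derivative_iff_has_vector_derivative)
  from vector_diff_chain_at[OF this branch_has_vector_derivative] show ?thesis
    by (simp add: o_def)
qed

definition loop :: "real \<Rightarrow> real \<times> real" where
  "loop t = (if t \<le> 1/2 then branch 1 (2*pi*t - pi/2) else branch (-1) (3*pi/2 - 2*pi*t))"

definition loop_angle :: "real \<Rightarrow> real" where
  "loop_angle t = (if t \<le> 1/2 then 2*pi*t - pi/2 else 3*pi/2 - 2*pi*t)"

lemma loop_C1_differentiable: "loop C1_differentiable_on {0..1}"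
proof -
  define D where "D t = (if t \<le> 1/2 then (2*pi) *\<^sub>R branch' 1 (2*pi*t - pi/2)
    else (-2*pi) *\<^sub>R branch' (-1) (3*pi/2 - 2*pi*t))" for t
  have right: "((\<lambda>t. branch 1 (2*pi*t - pi/2)) has_vector_derivative
      (2*pi) *\<^sub>R branch' 1 (2*pi*t - pi/2)) (at t)" for t
    using branch_affine_has_vector_derivative[of 1 "2*pi" "-(pi/2)" t] by simp
  have left: "((\<lambda>t. branch (-1) (3*pi/2 - 2*pi*t)) has_vector_derivative
      (-2*pi) *\<^sub>R branch' (-1) (3*pi/2 - 2*pi*t)) (at t)" for t
    using branch_affine_has_vector_derivative[of "-1" "-2*pi" "3*pi/2" t] by (simp add: algebra_simps)
  have north: "2*pi*(1/2) - pi/2 = pi/2" "3*pi/2 - 2*pi*(1/2) = pi/2"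
    by simp_all
  have glue: "branch 1 (2*pi*(1/2) - pi/2) = branch (-1) (3*pi/2 - 2*pi*(1/2))"
      "(2*pi) *\<^sub>R branch' 1 (2*pi*(1/2) - pi/2) = (-2*pi) *\<^sub>R branch' (-1) (3*pi/2 - 2*pi*(1/2))"
    unfolding north branch'_north by (simp_all add: branch_cos_zero[of _ "-1"])
  have "(loop has_vector_derivative D t) (at t)" for t
    unfolding loop_def[abs_def] D_def
    by (rule has_vector_derivative_if_le[OF right left glue])
  moreover have "continuous_on UNIV D"
    unfolding D_def
  proof (rule continuous_on_cases_le[where h = "\<lambda>t. t"])
    show "continuous_on {t \<in> UNIV. t \<le> 1/2} (\<lambda>t. (2*pi) *\<^sub>R branch' 1 (2*pi*t - pi/2))"
      "continuous_on {t \<in> UNIV. 1/2 \<le> t} (\<lambda>t. (-2*pi) *\<^sub>R branch' (-1) (3*pi/2 - 2*pi*t))"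
      by (intro continuous_intros continuous_on_compose2[OF continuous_branch'], simp_all)+
  qed (simp_all only: glue(2) continuous_on_id)
  ultimately show ?thesis
    unfolding C1_differentiable_on_def by (blast intro: continuous_on_subset)
qed

lemma loop_on_indicatrix:
  assumes "t \<in> {0..1}" shows "fK g (loop t) = 1" "fPhi g (loop t) = loop_angle t"
proof -
  have "-(pi/2) \<le> loop_angle t \<and> loop_angle t \<le> pi/2"
    using assms by (auto simp: loop_angle_def field_simps)
  then show "fK g (loop t) = 1" "fPhi g (loop t) = loop_angle t"
    using branch_on_indicatrix[of 1 "loop_angle t"] branch_on_indicatrix[of "-1" "loop_angle t"]
    by (simp_all add: loop_def loop_angle_def split: if_splits)
qed

lemma loop_fst_sign:
  "0 < t \<Longrightarrow> t < 1/2 \<Longrightarrow> 0 < fst (loop t)"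
  "1/2 < t \<Longrightarrow> t < 1 \<Longrightarrow> fst (loop t) < 0"
proof -
  have "0 < radius \<phi> * cos \<phi> / h" if "-(pi/2) < \<phi>" "\<phi> < pi/2" for \<phi>
    using cos_gt_zero_pi[OF that] radius_pos[of \<phi>] fh_pos by simp
  then show "0 < t \<Longrightarrow> t < 1/2 \<Longrightarrow> 0 < fst (loop t)"
    "1/2 < t \<Longrightarrow> t < 1 \<Longrightarrow> fst (loop t) < 0"
    by (simp_all add: loop_def branch_def field_simps)
qed

lemma loop_free_loop: "loop_free loop"
proof -
  have across: "x = 0 \<and> y = 1"
    if "x \<in> {0..1}" "y \<in> {0..1}" "x \<le> 1/2" "1/2 < y" "loop x = loop y" for x y
  proof -
    have "2*pi*x - pi/2 = 3*pi/2 - 2*pi*y"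
      using loop_on_indicatrix(2)[of x] loop_on_indicatrix(2)[of y] that
      by (simp add: loop_angle_def)
    then have "pi * (x + y) = pi * 1" by (simp add: algebra_simps)
    then have "x + y = 1" by simp
    moreover have "\<not> (0 < x \<and> x < 1/2 \<and> 1/2 < y \<and> y < 1)"
    proof
      assume "0 < x \<and> x < 1/2 \<and> 1/2 < y \<and> y < 1"
      then have "0 < fst (loop x)" "fst (loop y) < 0" using loop_fst_sign by simp_all
      then show False using that(5) by simp
    qed
    ultimately show ?thesis using that by auto
  qed
  have "x = y" if "x \<in> {0..1}" "y \<in> {0..1}" "x \<le> 1/2 \<longleftrightarrow> y \<le> 1/2" "loop x = loop y" for x y
  proof -
    have "loop_angle x = loop_angle y" using loop_on_indicatrix(2) that by metis
    then show "x = y" using that(3) by (cases "x \<le> 1/2") (simp_all add: loop_angle_def)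
  qed
  then show ?thesis
    unfolding loop_free_def using across by (metis linorder_not_le)
qed

lemma indicatrix_subset_loop_image: "indicatrix g \<subseteq> loop ` {0..1}"
proof
  fix R assume "R \<in> indicatrix g"
  then have K: "fK g R = 1" unfolding indicatrix_def by simp
  define \<phi> where "\<phi> = fPhi g R"
  have \<phi>: "-(pi/2) \<le> \<phi>" "\<phi> \<le> pi/2"
    using fPhi_bounds K unfolding \<phi>_def fK_eq_1_iff by auto
  show "R \<in> loop ` {0..1}"
  proof (cases "0 \<le> fst R")
    case True
    then have "R = loop ((\<phi> + pi/2) / (2*pi))"
      using indicatrix_eq_branch[OF K, of 1] \<phi> by (simp add: loop_def \<phi>_def field_simps)
    then show ?thesis using \<phi> by (auto simp: field_simps)
  next
    case False
    then have R: "R = branch (-1) \<phi>"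
      using indicatrix_eq_branch[OF K, of "-1"] unfolding \<phi>_def by simp
    have "R = loop ((3*pi/2 - \<phi>) / (2*pi))"
    proof (cases "\<phi> = pi/2")
      case True
      then show ?thesis unfolding R True loop_def by (simp add: branch_cos_zero[of _ "-1"])
    next
      case False
      then show ?thesis unfolding R loop_def using \<phi> by (simp add: field_simps)
    qed
    then show ?thesis using \<phi> by (auto simp: field_simps)
  qed
qed

lemma once_around_loop: "once_around g loop"
proof -
  have "loop 1 = loop 0"
    by (simp add: loop_def branch_cos_zero[of _ "-1"])
  moreover have "loop ` {0..1} = indicatrix g"
    using loop_on_indicatrix(1) indicatrix_subset_loop_image by (auto simp: indicatrix_def)
  ultimately show ?thesis
    using loop_C1_differentiable loop_free_loop C1_differentiable_imp_continuous_on
    by (simp add: once_around_def simple_path_def path_def pathstart_def pathfinish_def path_image_def)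
qed

end

theorem theorem1p3:
  fixes g :: real
  assumes "-2 < g" and "g < 2"
  shows "(\<exists>\<gamma>. once_around g \<gamma>)
    \<and> (\<forall>\<gamma>. once_around g \<gamma> \<longrightarrow>
          (finsler_speed g \<gamma> has_integral (2 * pi / fh g)) {0..1})
    \<and> 2 * pi / fh g \<ge> 2 * pi
    \<and> (2 * pi / fh g = 2 * pi \<longleftrightarrow> g = 0)
    \<and> filterlim (\<lambda>x. 2 * pi / fh x) at_top (at_left 2)
    \<and> filterlim (\<lambda>x. 2 * pi / fh x) at_top (at_right (-2))"
proof -
  interpret finsleroid g using assms by unfold_locales
  have "fh g \<le> 1" and "fh g = 1 \<longleftrightarrow> g = 0"
    unfolding fh_def by simp_all
  then have "2 * pi \<le> 2 * pi / fh g" and "2 * pi / fh g = 2 * pi \<longleftrightarrow> g = 0"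
    using fh_pos by (simp_all add: field_simps)
  moreover have "filterlim (\<lambda>x. 2 * pi / fh x) at_top (at_left 2)"
    and "filterlim (\<lambda>x. 2 * pi / fh x) at_top (at_right (-2))"
    unfolding fh_def by real_asymp+
  ultimately show ?thesis
    using once_around_loop finsler_speed_has_integral_once_around by blast
qed

end
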